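(* Let $\mathfrak p=(p_1,p_2,p_3,p_4)$ be a quadruple of distinct points in $\partial\mathbf H^2_{\mathbb C}$, and let $$\mathbb X_1=\mathbb X(p_1,p_2,p_3,p_4),\qquad \mathbb X_2=\mathbb X(p_1,p_3,p_2,p_4),\qquad \mathbb X_3=\mathbb X(p_2,p_3,p_1,p_4)$$ be its Korányi–Reimann complex cross-ratios. Then $$|\mathbb X_1|^{1/2}+|\mathbb X_2|^{1/2}\ge 1\qquad\text{and}\qquad -1\le |\mathbb X_1|^{1/2}-|\mathbb X_2|^{1/2}\le 1.$$ Moreover, equality holds in one of these three inequalities if and only if all four points of $\mathfrak p$ lie on a common $\mathbb R$-circle. In that case $\mathbb X_1>0$ and $\mathbb X_2>0$ (positive reals), and, writing $\mathbb X_i^{1/2}$ for the positive square root: (1) $\mathbb X_1^{1/2}-\mathbb X_2^{1/2}=1$ if $p_1$ and $p_3$ separate $p_2$ and $p_4$ on that $\mathbb R$-circle; (2) $\mathbb X_2^{1/2}-\mathbb X_1^{1/2}=1$ if $p_1$ and $p_2$ separate $p_3$ and $p_4$; (3) $\mathbb X_1^{1/2}+\mathbb X_2^{1/2}=1$ if $p_1$ and $p_4$ separate $p_2$ and $p_3$.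
   Context: Let $\mathbb C^{2,1}$ denote $\mathbb C^3$ with the Hermitian form of signature $(2,1)$: $\langle \mathbf z,\mathbf w\rangle=z_1\overline{w_3}+z_2\overline{w_2}+z_3\overline{w_1}$. Let $V_0=\{\mathbf z\in\mathbb C^{2,1}\setminus\{0\}:\langle\mathbf z,\mathbf z\rangle=0\}$ and $V_-=\{\mathbf z:\langle\mathbf z,\mathbf z\rangle<0\}$, and let $\mathbb P:\mathbb C^{2,1}\setminus\{0\}\to\mathbb CP^2$ be the projectivization. Complex hyperbolic space is $\mathbf H^2_{\mathbb C}=\mathbb P(V_-)$ and its boundary is $\partial\mathbf H^2_{\mathbb C}=\mathbb P(V_0)$ (a 3-sphere). A lift of $p\in\partial\mathbf H^2_{\mathbb C}$ is any $\mathbf p\in V_0$ with $\mathbb P(\mathbf p)=p$. For distinct $p_1,\dots,p_4\in\partial\mathbf H^2_{\mathbb C}$ with lifts $\mathbf p_i$, the Korányi–Reimann complex cross-ratio is $$\mathbb X(p_1,p_2,p_3,p_4)=\frac{\langle\mathbf p_3,\mathbf p_1\rangle\langle\mathbf p_4,\mathbf p_2\rangle}{\langle\mathbf p_4,\mathbf p_1\rangle\langle\mathbf p_3,\mathbf p_2\rangle},$$ which is independent of the choice of lifts (distinct boundary points have nonzero pairing). The holomorphic isometry group of $\mathbf H^2_{\mathbb C}$ is $\mathrm{PU}(2,1)$, the projectivized group of linear maps preserving $\langle\cdot,\cdot\rangle$. An $\mathbb R$-circle is the boundary in $\partial\mathbf H^2_{\mathbb C}$ of a Lagrangian plane (an isometric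 image of real hyperbolic plane $\mathbf H^2_{\mathbb R}$ in $\mathbf H^2_{\mathbb C}$); equivalently, it is an image under $\mathrm{PU}(2,1)$ of the standard $\mathbb R$-circle $\mathbb P(V_0\cap\mathbb R^3)$. An $\mathbb R$-circle is a topological circle; for four distinct points on it, "$p_a$ and $p_b$ separate $p_c$ and $p_d$" means $p_c$ and $p_d$ lie in different components of the circle with $p_a,p_b$ removed. *)

theory Defs
  imports "HOL-Analysis.Analysis"
begin

text \<open>Vectors of C^{2,1} are elements of complex^3 (indices 1,2,3).\<close>

definition herm :: "complex^3 \<Rightarrow> complex^3 \<Rightarrow> complex" where
  "herm z w = z$1 * cnj (w$3) + z$2 * cnj (w$2) + z$3 * cnj (w$1)"

text \<open>A lift of a boundary point: nonzero null vector.\<close>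
definition null_vec :: "complex^3 \<Rightarrow> bool" where
  "null_vec z \<longleftrightarrow> z \<noteq> 0 \<and> herm z z = 0"

definition same_point :: "complex^3 \<Rightarrow> complex^3 \<Rightarrow> bool" where
  "same_point p q \<longleftrightarrow> (\<exists>c::complex. c \<noteq> 0 \<and> q = c *s p)"

definition KR_cross :: "complex^3 \<Rightarrow> complex^3 \<Rightarrow> complex^3 \<Rightarrow> complex^3 \<Rightarrow> complex" where
  "KR_cross p1 p2 p3 p4 =
     (herm p3 p1 * herm p4 p2) / (herm p4 p1 * herm p3 p2)"

definition unitary21 :: "complex^3^3 \<Rightarrow> bool" where
  "unitary21 A \<longleftrightarrow> (\<forall>z w. herm (A *v z) (A *v w) = herm z w)"

definition real_vec :: "complex^3 \<Rightarrow> bool" where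
  "real_vec r \<longleftrightarrow> (\<forall>i. r$i \<in> \<real>)"

text \<open>The point p lies on the R-circle A(P(V_0 \<inter> R^3)).\<close>
definition on_R_circle :: "complex^3^3 \<Rightarrow> complex^3 \<Rightarrow> bool" where
  "on_R_circle A p \<longleftrightarrow> unitary21 A \<and>
     (\<exists>r. real_vec r \<and> null_vec r \<and> same_point (A *v r) p)"

definition concyclic_R :: "complex^3 \<Rightarrow> complex^3 \<Rightarrow> complex^3 \<Rightarrow> complex^3 \<Rightarrow> bool" where
  "concyclic_R p1 p2 p3 p4 \<longleftrightarrow>
     (\<exists>A. on_R_circle A p1 \<and> on_R_circle A p2 \<and> on_R_circle A p3 \<and> on_R_circle A p4)"

text \<open>Angular parametrisation of the standard R-circle P(V_0 \<inter> R^3):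
  theta in [0, 2pi) maps bijectively onto it (a homeomorphism of the circle R/2piZ).\<close>
definition std_R_pt :: "real \<Rightarrow> complex^3" where
  "std_R_pt t = (\<chi> i. if i = 1 then complex_of_real (1 + cos t)
                      else if i = 2 then complex_of_real (sin t)
                      else complex_of_real (- (1 - cos t) / 2))"

definition R_circle_param :: "complex^3^3 \<Rightarrow> real \<Rightarrow> complex^3 \<Rightarrow> bool" where
  "R_circle_param A t p \<longleftrightarrow> unitary21 A \<and> 0 \<le> t \<and> t < 2 * pi \<and>
     same_point (A *v std_R_pt t) p"

text \<open>On a circle parametrised by [0,2pi), the points with parameters a,b separate
  those with parameters c,d iff exactly one of c,d lies in the open arc between a and b.\<close>
definition separates :: "real \<Rightarrow> real \<Rightarrow> real \<Rightarrow> real \<Rightarrow> bool" where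
  "separates a b c d \<longleftrightarrow>
     ((min a b < c \<and> c < max a b) \<noteq> (min a b < d \<and> d < max a b))"

end

theory Submission
  imports Defs
begin

text \<open>
  Write g_ij for the pairings of lifts of the four points and put
  a = |g12| |g34|, b = |g13| |g24|, c = |g14| |g23|, so that |X1| = b / c and |X2| = a / c.
  Four vectors of a 3-space have vanishing Gram determinant; for null vectors this reads
  a^2 + b^2 + c^2 = 2 Re (T1 + T2 + T3), where T1, T2, T3 are the three cyclic products
  g12 g23 g34 g41, g13 g32 g24 g41, g12 g24 g43 g31, of moduli ac, bc, ab. Hence
  a^2 + b^2 + c^2 <= 2 (ab + bc + ca), which by Heron's factorisation says that sqrt a, sqrt b,
  sqrt c satisfy the triangle inequalities, with a degenerate triangle exactly when all three
  cyclic products are nonnegative reals.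

  Cartan's inequality Re (g12 g23 g31) <= 0 identifies the latter condition with the points
  lying on an R-circle: real lifts make all triple products nonpositive reals, and conversely,
  after rescaling so that p2, p3, p4 pair to 1 with p1, the remaining pairings are real and
  p1, p2, p3 span a real frame of C^{2,1}. On the standard R-circle the pairings are
  -2 sin^2 ((t_i - t_j) / 2), and Ptolemy's identity for sines decides the equality case from
  the cyclic order of the parameters.
\<close>

section \<open>The Hermitian form\<close>

lemma vec3_eq_iff: "(x::complex^3) = y \<longleftrightarrow> x$1 = y$1 \<and> x$2 = y$2 \<and> x$3 = y$3"
  by (simp add: vec_eq_iff forall_3)

lemma cnj_herm: "cnj (herm z w) = herm w z"
  by (simp add: herm_def algebra_simps)

lemma herm_swap_eq_0_iff: "herm w z = 0 \<longleftrightarrow> herm z w = 0"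
  by (metis cnj_herm complex_cnj_zero_iff)

lemma herm_mult_swap: "herm z w * herm w z = of_real ((cmod (herm z w))\<^sup>2)"
  by (metis cnj_herm complex_norm_square)

lemma herm_smult_left: "herm (c *s z) w = c * herm z w"
  by (simp add: herm_def algebra_simps)

lemma herm_smult_right: "herm z (c *s w) = cnj c * herm z w"
  by (simp add: herm_def algebra_simps)

lemma herm_add_left: "herm (x + y) w = herm x w + herm y w"
  by (simp add: herm_def algebra_simps)

lemma herm_add_right: "herm w (x + y) = herm w x + herm w y"
  by (simp add: herm_def algebra_simps)

lemma herm_diff_left: "herm (x - y) w = herm x w - herm y w"
  by (simp add: herm_def algebra_simps)

lemma herm_diff_right: "herm w (x - y) = herm w x - herm w y"
  by (simp add: herm_def algebra_simps)

lemma herm_zero_left [simp]: "herm 0 w = 0"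
  and herm_zero_right [simp]: "herm w 0 = 0"
  by (simp_all add: herm_def)

lemma same_point_sym: "same_point p q \<Longrightarrow> same_point q p"
  unfolding same_point_def
  by (metis (no_types, lifting) divide_eq_0_iff nonzero_divide_eq_eq one_neq_zero
      vector_smult_assoc vector_smult_lid)

lemma same_point_if_herm_eq_0_coord3:
  assumes "null_vec p" "null_vec q" "herm p q = 0" "p$3 = 0"
  shows "same_point p q"
proof -
  have p2: "p$2 = 0"
    using assms(1,4) by (simp add: null_vec_def herm_def)
  have p1: "p$1 \<noteq> 0"
    using assms(1,4) p2 by (auto simp: null_vec_def vec3_eq_iff)
  have q3: "q$3 = 0"
    using assms(3,4) p1 p2 by (simp add: herm_def)
  have q2: "q$2 = 0"
    using assms(2) q3 by (simp add: null_vec_def herm_def)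
  have q1: "q$1 \<noteq> 0"
    using assms(2) q2 q3 by (auto simp: null_vec_def vec3_eq_iff)
  show ?thesis unfolding same_point_def
    by (rule exI[of _ "q$1 / p$1"]) (use p1 q1 p2 q2 q3 assms(4) in \<open>simp add: vec3_eq_iff\<close>)
qed

text \<open>The key identity writes the squared modulus of a 2x2 minor of p and q as a combination
  of their pairings.\<close>
lemma herm_null_nonzero:
  assumes np: "null_vec p" and nq: "null_vec q" and ns: "\<not> same_point p q"
  shows "herm p q \<noteq> 0"
proof
  assume h: "herm p q = 0"
  have h': "herm q p = 0" using h herm_swap_eq_0_iff by blast
  have p3: "p$3 \<noteq> 0"
    using same_point_if_herm_eq_0_coord3[OF np nq h] ns by blast
  have q3: "q$3 \<noteq> 0"
    using same_point_if_herm_eq_0_coord3[OF nq np h'] ns same_point_sym by blast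
  define w where "w = p$2 * q$3 - q$2 * p$3"
  have "herm p q * cnj (p$3) * q$3 + herm q p * p$3 * cnj (q$3) + w * cnj w
      = q$3 * cnj (q$3) * herm p p + p$3 * cnj (p$3) * herm q q"
    unfolding herm_def w_def by (simp add: algebra_simps)
  hence "w = 0" using h h' np nq by (simp add: null_vec_def)
  define c where "c = q$3 / p$3"
  have "q$3 = (c *s p)$3" "q$2 = (c *s p)$2"
    using p3 \<open>w = 0\<close> by (simp_all add: c_def w_def field_simps)
  moreover have "herm (q - c *s p) p = 0"
    using h' np by (simp add: herm_diff_left herm_smult_left null_vec_def)
  ultimately have "q = c *s p"
    using p3 by (simp add: herm_def vec3_eq_iff)
  moreover have "c \<noteq> 0" using q3 p3 by (simp add: c_def)
  ultimately show False using ns by (auto simp: same_point_def)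
qed

section \<open>Ptolemy's relation for null quadruples\<close>

definition herm_triple :: "complex^3 \<Rightarrow> complex^3 \<Rightarrow> complex^3 \<Rightarrow> complex" where
  "herm_triple u v w = herm u v * herm v w * herm w u"

definition herm_cycle :: "complex^3 \<Rightarrow> complex^3 \<Rightarrow> complex^3 \<Rightarrow> complex^3 \<Rightarrow> complex" where
  "herm_cycle p q r s = herm p q * herm q r * herm r s * herm s p"

lemma herm_cycle_mult_norm:
  "herm_cycle p1 p2 p3 p4 * of_real ((cmod (herm p1 p3))\<^sup>2)
     = herm_triple p1 p2 p3 * herm_triple p1 p3 p4"
  unfolding herm_mult_swap[symmetric] herm_cycle_def herm_triple_def by (simp add: algebra_simps)

lemma herm_gram_det3:
  fixes u v w :: "complex^3"
  defines "d \<equiv> u$1 * (v$2 * w$3 - v$3 * w$2) - u$2 * (v$1 * w$3 - v$3 * w$1)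
                 + u$3 * (v$1 * w$2 - v$2 * w$1)"
  shows "herm u u * herm v v * herm w w - herm u u * herm v w * herm w v
     - herm u v * herm v u * herm w w + herm u v * herm v w * herm w u
     + herm u w * herm v u * herm w v - herm u w * herm v v * herm w u = - d * cnj d"
  unfolding herm_def d_def by (simp add: algebra_simps)

text \<open>Twice the real part of the triple product is minus the squared modulus of det (u, v, w);
  the argument of the triple product is Cartan's angular invariant.\<close>
lemma Re_herm_triple_nonpos:
  assumes "null_vec u" "null_vec v" "null_vec w"
  shows "Re (herm_triple u v w) \<le> 0"
proof -
  define d where "d = u$1 * (v$2 * w$3 - v$3 * w$2) - u$2 * (v$1 * w$3 - v$3 * w$1)
                 + u$3 * (v$1 * w$2 - v$2 * w$1)"
  have "herm_triple u v w + cnj (herm_triple u v w) = - d * cnj d"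
    using herm_gram_det3[of u v w] assms unfolding d_def
    by (simp add: null_vec_def herm_triple_def cnj_herm algebra_simps)
  hence "complex_of_real (2 * Re (herm_triple u v w)) = - complex_of_real ((cmod d)\<^sup>2)"
    by (simp only: complex_add_cnj complex_norm_square mult_minus_left)
  hence "2 * Re (herm_triple u v w) = - (cmod d)\<^sup>2"
    by (metis of_real_eq_iff of_real_minus)
  thus ?thesis by (smt (verit) zero_le_power2)
qed

lemma herm_gram_det4_eq_0:
  fixes p1 p2 p3 p4 :: "complex^3"
  defines "g \<equiv> herm"
  shows "g p1 p1*g p2 p2*g p3 p3*g p4 p4 - g p1 p1*g p2 p2*g p3 p4*g p4 p3
     - g p1 p1*g p2 p3*g p3 p2*g p4 p4 + g p1 p1*g p2 p3*g p3 p4*g p4 p2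
     + g p1 p1*g p2 p4*g p3 p2*g p4 p3 - g p1 p1*g p2 p4*g p3 p3*g p4 p2
     - g p1 p2*g p2 p1*g p3 p3*g p4 p4 + g p1 p2*g p2 p1*g p3 p4*g p4 p3
     + g p1 p2*g p2 p3*g p3 p1*g p4 p4 - g p1 p2*g p2 p3*g p3 p4*g p4 p1
     - g p1 p2*g p2 p4*g p3 p1*g p4 p3 + g p1 p2*g p2 p4*g p3 p3*g p4 p1
     + g p1 p3*g p2 p1*g p3 p2*g p4 p4 - g p1 p3*g p2 p1*g p3 p4*g p4 p2
     - g p1 p3*g p2 p2*g p3 p1*g p4 p4 + g p1 p3*g p2 p2*g p3 p4*g p4 p1
     + g p1 p3*g p2 p4*g p3 p1*g p4 p2 - g p1 p3*g p2 p4*g p3 p2*g p4 p1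
     - g p1 p4*g p2 p1*g p3 p2*g p4 p3 + g p1 p4*g p2 p1*g p3 p3*g p4 p2
     + g p1 p4*g p2 p2*g p3 p1*g p4 p3 - g p1 p4*g p2 p2*g p3 p3*g p4 p1
     - g p1 p4*g p2 p3*g p3 p1*g p4 p2 + g p1 p4*g p2 p3*g p3 p2*g p4 p1 = 0"
  unfolding g_def herm_def by algebra

lemma null_quadruple_ptolemy:
  assumes "null_vec p1" "null_vec p2" "null_vec p3" "null_vec p4"
  shows "(cmod (herm p1 p2) * cmod (herm p3 p4))\<^sup>2 + (cmod (herm p1 p3) * cmod (herm p2 p4))\<^sup>2
       + (cmod (herm p1 p4) * cmod (herm p2 p3))\<^sup>2
       = 2 * Re (herm_cycle p1 p2 p3 p4) + 2 * Re (herm_cycle p1 p3 p2 p4)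
       + 2 * Re (herm_cycle p1 p2 p4 p3)"
    (is "?lhs = 2 * Re ?T1 + 2 * Re ?T2 + 2 * Re ?T3")
proof -
  have G: "herm p1 p2*herm p2 p1*herm p3 p4*herm p4 p3 - herm p1 p2*herm p2 p3*herm p3 p4*herm p4 p1
      - herm p1 p2*herm p2 p4*herm p3 p1*herm p4 p3 - herm p1 p3*herm p2 p1*herm p3 p4*herm p4 p2
      + herm p1 p3*herm p2 p4*herm p3 p1*herm p4 p2 - herm p1 p3*herm p2 p4*herm p3 p2*herm p4 p1
      - herm p1 p4*herm p2 p1*herm p3 p2*herm p4 p3 - herm p1 p4*herm p2 p3*herm p3 p1*herm p4 p2
      + herm p1 p4*herm p2 p3*herm p3 p2*herm p4 p1 = 0"
    using herm_gram_det4_eq_0[of p1 p2 p3 p4] assms by (simp add: null_vec_def)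
  have "complex_of_real ?lhs = herm p1 p2 * herm p2 p1 * (herm p3 p4 * herm p4 p3)
      + herm p1 p3 * herm p3 p1 * (herm p2 p4 * herm p4 p2)
      + herm p1 p4 * herm p4 p1 * (herm p2 p3 * herm p3 p2)"
    by (simp add: herm_mult_swap power_mult_distrib)
  also have "\<dots> = (?T1 + cnj ?T1) + (?T2 + cnj ?T2) + (?T3 + cnj ?T3)"
    using G by (simp add: herm_cycle_def cnj_herm) algebra
  also have "\<dots> = complex_of_real (2 * Re ?T1 + 2 * Re ?T2 + 2 * Re ?T3)"
    by (simp only: complex_add_cnj of_real_add)
  finally show ?thesis using of_real_eq_iff by blast
qed

lemma heron_factorization:
  fixes a b c :: real
  shows "2 * (a\<^sup>2 * b\<^sup>2 + b\<^sup>2 * c\<^sup>2 + c\<^sup>2 * a\<^sup>2) - a^4 - b^4 - c^4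
       = (a + b + c) * (a + b - c) * (b + c - a) * (c + a - b)"
  by algebra

lemma nonneg_if_mult3_nonneg:
  fixes x y z :: real
  assumes "0 \<le> x * y * z" "0 \<le> x + y" "0 \<le> y + z" "0 \<le> z + x"
  shows "0 \<le> x" "0 \<le> y" "0 \<le> z"
  using assms by (smt (verit) mult_neg_pos mult_pos_neg mult_pos_pos)+

lemma sqrt_triangle_if_heron:
  fixes u v :: real
  assumes "0 \<le> u" "0 \<le> v" and heron: "1 + u\<^sup>2 + v\<^sup>2 \<le> 2 * (u + v + u * v)"
  shows "1 \<le> sqrt u + sqrt v" "-1 \<le> sqrt u - sqrt v" "sqrt u - sqrt v \<le> 1"
    and "(sqrt u + sqrt v = 1 \<or> sqrt u - sqrt v = -1 \<or> sqrt u - sqrt v = 1)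
           \<longleftrightarrow> 1 + u\<^sup>2 + v\<^sup>2 = 2 * (u + v + u * v)"
proof -
  define a b where "a = sqrt u" and "b = sqrt v"
  have ab: "0 \<le> a" "0 \<le> b" "a\<^sup>2 = u" "b\<^sup>2 = v"
    using assms by (simp_all add: a_def b_def)
  have Q: "2 * (u + v + u * v) - (1 + u\<^sup>2 + v\<^sup>2)
         = (a + b + 1) * ((a + b - 1) * (b + 1 - a) * (1 + a - b))"
    using heron_factorization[of a b 1] by (simp add: ab(3,4)[symmetric] algebra_simps)
  have "0 \<le> (a + b - 1) * (b + 1 - a) * (1 + a - b)"
    using Q heron ab(1,2) by (smt (verit) zero_le_mult_iff)
  from nonneg_if_mult3_nonneg[OF this] ab(1,2)
  have "0 \<le> a + b - 1" "0 \<le> b + 1 - a" "0 \<le> 1 + a - b" by simp_all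
  thus "1 \<le> sqrt u + sqrt v" "-1 \<le> sqrt u - sqrt v" "sqrt u - sqrt v \<le> 1"
    by (simp_all add: a_def b_def)
  have "1 + u\<^sup>2 + v\<^sup>2 = 2 * (u + v + u * v) \<longleftrightarrow> (a + b - 1) * (b + 1 - a) * (1 + a - b) = 0"
    using Q ab(1,2) by (smt (verit) mult_eq_0_iff)
  thus "(sqrt u + sqrt v = 1 \<or> sqrt u - sqrt v = -1 \<or> sqrt u - sqrt v = 1)
          \<longleftrightarrow> 1 + u\<^sup>2 + v\<^sup>2 = 2 * (u + v + u * v)"
    by (auto simp: a_def b_def)
qed

lemma Re_eq_cmod_iff: "Re z = cmod z \<longleftrightarrow> z \<in> \<real>\<^sub>\<ge>\<^sub>0"
proof
  assume "Re z = cmod z"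
  hence "Im z = 0" "0 \<le> Re z"
    using cmod_power2[of z] by (auto simp: power2_eq_square)
  thus "z \<in> \<real>\<^sub>\<ge>\<^sub>0" by (simp add: complex_nonneg_Reals_iff)
qed (simp add: nonneg_Reals_cmod_eq_Re)

text \<open>No hypotheses are needed: if a pairing in the denominator vanishes, both sides are 0
  by the convention x / 0 = 0.\<close>
lemma KR_cross_eq_cnj_herm_cycle:
  "KR_cross p1 p2 p3 p4
     = cnj (herm_cycle p1 p3 p2 p4) / of_real ((cmod (herm p1 p4) * cmod (herm p2 p3))\<^sup>2)"
proof -
  have "cmod (herm p4 p1 * herm p3 p2) = cmod (herm p1 p4) * cmod (herm p2 p3)"
    by (metis cnj_herm complex_mod_cnj norm_mult)
  thus ?thesis
    unfolding KR_cross_def complex_div_cnj[of "herm p3 p1 * herm p4 p2"]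
    by (simp add: herm_cycle_def cnj_herm algebra_simps)
qed

lemma cmod_herm_cycle:
  "cmod (herm_cycle p q r s) = cmod (herm p q) * cmod (herm r s) * (cmod (herm q r) * cmod (herm s p))"
  by (simp add: herm_cycle_def norm_mult)

lemma cmod_herm_swap: "cmod (herm w z) = cmod (herm z w)"
  by (metis complex_mod_cnj cnj_herm)

lemma KR_cross_ptolemy:
  assumes null: "null_vec p1" "null_vec p2" "null_vec p3" "null_vec p4"
    and nz: "herm p1 p4 \<noteq> 0" "herm p2 p3 \<noteq> 0"
  defines "x1 \<equiv> cmod (KR_cross p1 p2 p3 p4)" and "x2 \<equiv> cmod (KR_cross p1 p3 p2 p4)"
  shows "1 + x1\<^sup>2 + x2\<^sup>2 \<le> 2 * (x1 + x2 + x1 * x2)"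
    and "1 + x1\<^sup>2 + x2\<^sup>2 = 2 * (x1 + x2 + x1 * x2) \<longleftrightarrow>
           herm_cycle p1 p2 p3 p4 \<in> \<real>\<^sub>\<ge>\<^sub>0 \<and> herm_cycle p1 p3 p2 p4 \<in> \<real>\<^sub>\<ge>\<^sub>0
         \<and> herm_cycle p1 p2 p4 p3 \<in> \<real>\<^sub>\<ge>\<^sub>0"
proof -
  define a b c where "a = cmod (herm p1 p2) * cmod (herm p3 p4)"
    and "b = cmod (herm p1 p3) * cmod (herm p2 p4)" and "c = cmod (herm p1 p4) * cmod (herm p2 p3)"
  let ?T1 = "herm_cycle p1 p2 p3 p4" and ?T2 = "herm_cycle p1 p3 p2 p4"
    and ?T3 = "herm_cycle p1 p2 p4 p3"
  have c: "c > 0" using nz by (simp add: c_def)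
  have T: "cmod ?T1 = a * c" "cmod ?T2 = b * c" "cmod ?T3 = a * b"
    unfolding cmod_herm_cycle a_def b_def c_def by (simp_all add: cmod_herm_swap)
  have x: "x1 = b / c" "x2 = a / c"
    unfolding x1_def x2_def KR_cross_eq_cnj_herm_cycle norm_divide complex_mod_cnj norm_of_real
    using T(1,2) c by (simp_all add: cmod_herm_swap c_def[symmetric] power2_eq_square)
  have "c\<^sup>2 * (2 * (x1 + x2 + x1 * x2) - (1 + x1\<^sup>2 + x2\<^sup>2))
        = 2 * (a * c + b * c + a * b) - (a\<^sup>2 + b\<^sup>2 + c\<^sup>2)"
    using c by (simp add: x field_simps power2_eq_square)
  also have "\<dots> = 2 * ((cmod ?T1 - Re ?T1) + (cmod ?T2 - Re ?T2) + (cmod ?T3 - Re ?T3))"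
    using null_quadruple_ptolemy[OF null] by (simp add: T a_def b_def c_def algebra_simps)
  finally have key: "c\<^sup>2 * (2 * (x1 + x2 + x1 * x2) - (1 + x1\<^sup>2 + x2\<^sup>2))
        = 2 * ((cmod ?T1 - Re ?T1) + (cmod ?T2 - Re ?T2) + (cmod ?T3 - Re ?T3))" .
  have le: "Re ?T1 \<le> cmod ?T1" "Re ?T2 \<le> cmod ?T2" "Re ?T3 \<le> cmod ?T3"
    by (simp_all add: complex_Re_le_cmod)
  show "1 + x1\<^sup>2 + x2\<^sup>2 \<le> 2 * (x1 + x2 + x1 * x2)"
    using key le c by (smt (verit) zero_less_power mult_pos_neg)
  show "1 + x1\<^sup>2 + x2\<^sup>2 = 2 * (x1 + x2 + x1 * x2) \<longleftrightarrow> ?T1 \<in> \<real>\<^sub>\<ge>\<^sub>0 \<and> ?T2 \<in> \<real>\<^sub>\<ge>\<^sub>0 \<and> ?T3 \<in> \<real>\<^sub>\<ge>\<^sub>0"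
    using key le c unfolding Re_eq_cmod_iff[symmetric] by auto
qed

section \<open>Quadruples on an R-circle\<close>

lemma herm_smult_unitary21:
  "unitary21 A \<Longrightarrow> herm (a *s (A *v r)) (b *s (A *v s)) = a * cnj b * herm r s"
  by (simp add: herm_smult_left herm_smult_right unitary21_def)

lemma herm_real_vec: "real_vec r \<Longrightarrow> real_vec s \<Longrightarrow> herm r s \<in> \<real>"
  unfolding real_vec_def herm_def by (simp add: Reals_cnj_iff)

lemma on_R_circleE:
  assumes "on_R_circle A p"
  obtains r c where "real_vec r" "null_vec r" "c \<noteq> 0" "p = c *s (A *v r)"
  using assms unfolding on_R_circle_def same_point_def by blast

text \<open>Cartan's inequality makes every triple product of real null vectors a nonpositive real,
  and a cycle of four is a product of two such triples up to a positive factor.\<close>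
lemma herm_cycle_nonneg_if_real_vec:
  assumes real: "real_vec r1" "real_vec r2" "real_vec r3" "real_vec r4"
    and null: "null_vec r1" "null_vec r2" "null_vec r3" "null_vec r4"
    and nz: "herm r1 r3 \<noteq> 0"
  shows "herm_cycle r1 r2 r3 r4 \<in> \<real>\<^sub>\<ge>\<^sub>0"
proof -
  have nonpos: "herm_triple u v w \<in> \<real>\<^sub>\<le>\<^sub>0"
    if "u \<in> {r1, r2, r3, r4}" "v \<in> {r1, r2, r3, r4}" "w \<in> {r1, r2, r3, r4}" for u v w
  proof -
    have "herm_triple u v w \<in> \<real>"
      using that real herm_real_vec by (auto simp: herm_triple_def)
    moreover have "Re (herm_triple u v w) \<le> 0"
      using that null by (intro Re_herm_triple_nonpos) auto
    ultimately show ?thesis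
      by (metis Reals_cases Re_complex_of_real nonpos_Reals_of_real_iff)
  qed
  have "herm_triple r1 r2 r3 * herm_triple r1 r3 r4 \<in> \<real>\<^sub>\<ge>\<^sub>0"
    using nonpos_Reals_mult_I1[of "- herm_triple r1 r2 r3" "herm_triple r1 r3 r4"] nonpos by simp
  hence "herm_cycle r1 r2 r3 r4 * of_real ((cmod (herm r1 r3))\<^sup>2) \<in> \<real>\<^sub>\<ge>\<^sub>0"
    by (simp only: herm_cycle_mult_norm)
  moreover have "cmod (herm r1 r3) \<noteq> 0" using nz by simp
  ultimately show ?thesis
    by (metis nonneg_Reals_divide_I nonneg_Reals_of_real_iff nonzero_mult_div_cancel_right
        of_real_eq_0_iff zero_le_power2 power_not_zero)
qed

lemma herm_cycle_smult:
  "herm_cycle (c1 *s p1) (c2 *s p2) (c3 *s p3) (c4 *s p4)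
     = of_real ((cmod c1 * cmod c2 * cmod c3 * cmod c4)\<^sup>2) * herm_cycle p1 p2 p3 p4"
proof -
  have "herm_cycle (c1 *s p1) (c2 *s p2) (c3 *s p3) (c4 *s p4)
      = (c1 * cnj c1) * (c2 * cnj c2) * (c3 * cnj c3) * (c4 * cnj c4) * herm_cycle p1 p2 p3 p4"
    by (simp add: herm_cycle_def herm_smult_left herm_smult_right algebra_simps)
  thus ?thesis by (simp add: complex_norm_square[symmetric] power_mult_distrib)
qed

lemma herm_cycle_unitary21:
  "unitary21 A \<Longrightarrow> herm_cycle (A *v r1) (A *v r2) (A *v r3) (A *v r4) = herm_cycle r1 r2 r3 r4"
  by (simp add: herm_cycle_def unitary21_def)

lemma herm_cycle_nonneg_if_on_R_circle:
  assumes "on_R_circle A p1" "on_R_circle A p2" "on_R_circle A p3" "on_R_circle A p4"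
    and "herm p1 p3 \<noteq> 0"
  shows "herm_cycle p1 p2 p3 p4 \<in> \<real>\<^sub>\<ge>\<^sub>0"
proof -
  have A: "unitary21 A" using assms(1) by (simp add: on_R_circle_def)
  obtain r1 c1 where 1: "real_vec r1" "null_vec r1" "p1 = c1 *s (A *v r1)"
    using assms(1) by (rule on_R_circleE)
  obtain r2 c2 where 2: "real_vec r2" "null_vec r2" "p2 = c2 *s (A *v r2)"
    using assms(2) by (rule on_R_circleE)
  obtain r3 c3 where 3: "real_vec r3" "null_vec r3" "p3 = c3 *s (A *v r3)"
    using assms(3) by (rule on_R_circleE)
  obtain r4 c4 where 4: "real_vec r4" "null_vec r4" "p4 = c4 *s (A *v r4)"
    using assms(4) by (rule on_R_circleE)
  have "herm r1 r3 \<noteq> 0"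
    using assms(5) by (simp add: 1(3) 3(3) herm_smult_unitary21[OF A])
  hence "herm_cycle r1 r2 r3 r4 \<in> \<real>\<^sub>\<ge>\<^sub>0"
    using 1 2 3 4 by (intro herm_cycle_nonneg_if_real_vec)
  thus ?thesis
    by (simp add: 1(3) 2(3) 3(3) 4(3) herm_cycle_smult herm_cycle_unitary21[OF A])
qed

lemma KR_cross_real_pos_if_herm_cycle_nonneg:
  assumes "herm_cycle p1 p3 p2 p4 \<in> \<real>\<^sub>\<ge>\<^sub>0" "herm_cycle p1 p3 p2 p4 \<noteq> 0"
  shows "KR_cross p1 p2 p3 p4 \<in> \<real>" "Re (KR_cross p1 p2 p3 p4) > 0"
proof -
  obtain t where t: "herm_cycle p1 p3 p2 p4 = of_real t" "t > 0"
    using assms by (metis nonneg_Reals_cases of_real_0 order_le_less)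
  have "herm p1 p4 \<noteq> 0" "herm p2 p3 \<noteq> 0"
    using assms(2) by (auto simp: herm_cycle_def herm_swap_eq_0_iff)
  hence "KR_cross p1 p2 p3 p4 = of_real (t / (cmod (herm p1 p4) * cmod (herm p2 p3))\<^sup>2)"
      "t / (cmod (herm p1 p4) * cmod (herm p2 p3))\<^sup>2 > 0"
    using t by (simp_all add: KR_cross_eq_cnj_herm_cycle)
  thus "KR_cross p1 p2 p3 p4 \<in> \<real>" "Re (KR_cross p1 p2 p3 p4) > 0" by simp_all
qed

section \<open>Constructing the R-circle through three points\<close>

definition frame_matrix :: "complex^3 \<Rightarrow> complex^3 \<Rightarrow> complex^3 \<Rightarrow> complex^3^3" where
  "frame_matrix C1 C2 C3 = (\<chi> i j. if j = 1 then C1$i else if j = 2 then C2$i else C3$i)"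

lemma frame_matrix_mult_vec:
  "frame_matrix C1 C2 C3 *v z = z$1 *s C1 + z$2 *s C2 + z$3 *s C3"
  by (simp add: vec3_eq_iff matrix_vector_mult_def sum_3 frame_matrix_def algebra_simps)

lemma unitary21_frame_matrix:
  assumes "herm C1 C1 = 0" "herm C1 C2 = 0" "herm C1 C3 = 1"
    and "herm C2 C2 = 1" "herm C2 C3 = 0" "herm C3 C3 = 0"
  shows "unitary21 (frame_matrix C1 C2 C3)"
proof -
  have "herm C2 C1 = 0" "herm C3 C1 = 1" "herm C3 C2 = 0"
    using assms cnj_herm[of C1 C2] cnj_herm[of C1 C3] cnj_herm[of C2 C3] by simp_all
  hence "herm (frame_matrix C1 C2 C3 *v z) (frame_matrix C1 C2 C3 *v w)
           = z$1 * cnj (w$3) + z$2 * cnj (w$2) + z$3 * cnj (w$1)" for z w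
    using assms unfolding frame_matrix_mult_vec
    by (simp add: herm_add_left herm_add_right herm_smult_left herm_smult_right)
  thus ?thesis by (simp add: unitary21_def herm_def)
qed

lemma herm_axis: "herm u (axis 1 1) = u$3" "herm u (axis 2 1) = u$2" "herm u (axis 3 1) = u$1"
  by (simp_all add: herm_def axis_def)

lemma unitary21_surj:
  assumes "unitary21 A" obtains u where "A *v u = q"
proof -
  have "u = 0" if "A *v u = 0" for u
  proof -
    have "herm u w = 0" for w using assms that by (metis herm_zero_left unitary21_def)
    from this[of "axis 1 1"] this[of "axis 2 1"] this[of "axis 3 1"]
    show "u = 0" by (simp add: herm_axis vec3_eq_iff)
  qed
  hence "inj ((*v) A)" by (simp add: linear_injective_0)
  hence "surj ((*v) A)" by (simp add: linear_injective_imp_surjective)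
  thus ?thesis using that by (metis surjD)
qed

lemma on_R_circle_frame_matrix:
  assumes A: "unitary21 (frame_matrix C1 C2 C3)" and "null_vec w"
    and "herm w C1 \<in> \<real>" "herm w C2 \<in> \<real>" "herm w C3 \<in> \<real>"
  shows "on_R_circle (frame_matrix C1 C2 C3) w"
proof -
  obtain u where u: "frame_matrix C1 C2 C3 *v u = w" using A by (rule unitary21_surj)
  have hu: "herm u z = herm w (frame_matrix C1 C2 C3 *v z)" for z
    using A u by (metis unitary21_def)
  have "frame_matrix C1 C2 C3 *v axis 1 1 = C1" "frame_matrix C1 C2 C3 *v axis 2 1 = C2"
    "frame_matrix C1 C2 C3 *v axis 3 1 = C3"
    by (simp_all add: frame_matrix_mult_vec axis_def)
  hence "u$3 = herm w C1" "u$2 = herm w C2" "u$1 = herm w C3" "herm u u = herm w w"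
    using hu[of "axis 1 1"] hu[of "axis 2 1"] hu[of "axis 3 1"] hu[of u] u
    by (simp_all add: herm_axis)
  hence "real_vec u" "herm u u = 0"
    using assms(2-) by (simp_all add: real_vec_def forall_3 null_vec_def)
  moreover have "u \<noteq> 0" using u assms(2) by (auto simp: null_vec_def)
  ultimately show ?thesis
    using A u unfolding on_R_circle_def same_point_def null_vec_def
    by (metis vector_smult_lid one_neq_zero)
qed

text \<open>The frame is q1, q2 together with the unit spacelike vector orthogonal to them in the
  real span of q1, q2, q3; the Cartan inequality makes its squared norm positive.\<close>
lemma R_circle_through_null_triple:
  assumes null: "null_vec q1" "null_vec q2" "null_vec q3" and h12: "herm q1 q2 = 1"
    and real: "herm q3 q1 \<in> \<real>" "herm q3 q2 \<in> \<real>"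
    and nz: "herm q3 q1 \<noteq> 0" "herm q3 q2 \<noteq> 0"
  obtains A where "\<And>w. null_vec w \<Longrightarrow> herm w q1 \<in> \<real> \<Longrightarrow> herm w q2 \<in> \<real> \<Longrightarrow> herm w q3 \<in> \<real>
                       \<Longrightarrow> on_R_circle A w"
proof -
  obtain \<alpha> \<beta> where \<alpha>\<beta>: "herm q3 q2 = of_real \<alpha>" "herm q3 q1 = of_real \<beta>"
    using real by (metis Reals_cases)
  have h: "herm q2 q1 = 1" "herm q2 q3 = of_real \<alpha>" "herm q1 q3 = of_real \<beta>"
    using h12 \<alpha>\<beta> cnj_herm[of q1 q2] cnj_herm[of q3 q2] cnj_herm[of q3 q1] by simp_all
  have z: "herm q1 q1 = 0" "herm q2 q2 = 0" "herm q3 q3 = 0"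
    using null by (simp_all add: null_vec_def)
  have "\<alpha> * \<beta> \<le> 0"
    using Re_herm_triple_nonpos[OF null] by (simp add: herm_triple_def h12 h \<alpha>\<beta>)
  moreover have "\<alpha> * \<beta> \<noteq> 0" using nz \<alpha>\<beta> by simp
  ultimately have "\<alpha> * \<beta> < 0" by (simp add: less_le)
  hence pos: "- 2 * (\<alpha> * \<beta>) > 0" by linarith
  define v where "v = sqrt (- 2 * (\<alpha> * \<beta>))"
  have v: "v > 0" "v * v = - 2 * (\<alpha> * \<beta>)"
    using pos by (simp_all add: v_def)
  define Y where "Y = q3 - of_real \<alpha> *s q1 - of_real \<beta> *s q2"
  define C2 where "C2 = of_real (1 / v) *s Y"
  have Y: "herm q1 Y = 0" "herm Y q2 = 0" "herm Y Y = of_real (v * v)"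
    by (simp_all add: Y_def herm_diff_left herm_diff_right herm_add_left herm_add_right
        herm_smult_left herm_smult_right z h12 h \<alpha>\<beta> v(2) algebra_simps)
  have "herm q1 C2 = 0" "herm C2 q2 = 0" "herm C2 C2 = 1"
    using v(1) by (simp_all add: C2_def herm_smult_left herm_smult_right Y)
  hence A: "unitary21 (frame_matrix q1 C2 q2)"
    by (intro unitary21_frame_matrix) (simp_all add: z h12)
  have "on_R_circle (frame_matrix q1 C2 q2) w"
    if "null_vec w" "herm w q1 \<in> \<real>" "herm w q2 \<in> \<real>" "herm w q3 \<in> \<real>" for w
  proof (rule on_R_circle_frame_matrix[OF A that(1,2) _ that(3)])
    show "herm w C2 \<in> \<real>"
      using that(2-) by (simp add: C2_def Y_def herm_smult_right herm_diff_right)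
  qed
  thus ?thesis using that by blast
qed

lemma Reals_if_mult_Reals:
  fixes a b :: complex
  assumes "a \<in> \<real>" "a \<noteq> 0" "a * b \<in> \<real>"
  shows "b \<in> \<real>"
proof -
  have "b = (a * b) / a" using assms(2) by simp
  thus ?thesis using assms by (metis Reals_divide)
qed

lemma Reals_if_cnj_Reals: "cnj z \<in> \<real> \<Longrightarrow> z \<in> \<real>"
  by (metis Reals_cnj_iff complex_cnj_cnj)

lemma Reals_if_mult_cnj_nonneg:
  fixes X Y Z :: complex
  assumes XZ: "X * cnj Z \<in> \<real>\<^sub>\<ge>\<^sub>0" and XY: "cnj X * cnj Y \<in> \<real>\<^sub>\<ge>\<^sub>0" and YZ: "cnj Y * Z \<in> \<real>\<^sub>\<ge>\<^sub>0"
    and nz: "X \<noteq> 0" "Y \<noteq> 0" "Z \<noteq> 0"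
  shows "X \<in> \<real>" "Y \<in> \<real>" "Z \<in> \<real>"
proof -
  have "X * cnj Y = (X * cnj Z) * (cnj Y * Z) / of_real ((cmod Z)\<^sup>2)"
    using nz(3) unfolding complex_norm_square by (simp add: field_simps)
  hence "X * cnj Y \<in> \<real>\<^sub>\<ge>\<^sub>0" using XZ YZ by simp
  then obtain s where s: "X * cnj Y = of_real s" "s \<ge> 0" by (rule nonneg_Reals_cases)
  obtain t where t: "cnj X * cnj Y = of_real t" "t \<ge> 0" using XY by (rule nonneg_Reals_cases)
  have "s \<noteq> 0" using s(1) nz by auto
  moreover have "X * of_real t = cnj X * of_real s" by (metis s(1) t(1) mult.left_commute)
  hence "(s + t) * Im X = 0" by (simp add: complex_eq_iff algebra_simps)
  ultimately show X: "X \<in> \<real>" using s(2) t(2) by (simp add: complex_is_Real_iff)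
  have "cnj X \<in> \<real>" "cnj X \<noteq> 0" using X nz(1) by (simp_all add: Reals_cnj_iff)
  thus "Y \<in> \<real>"
    using Reals_if_mult_Reals[of "cnj X" "cnj Y"] XY Reals_if_cnj_Reals by blast
  show "Z \<in> \<real>"
    using Reals_if_mult_Reals[of X "cnj Z"] X XZ nz(1) Reals_if_cnj_Reals by blast
qed

lemma null_vec_smult: "null_vec p \<Longrightarrow> k \<noteq> 0 \<Longrightarrow> null_vec (k *s p)"
  by (simp add: null_vec_def herm_smult_left herm_smult_right vec_eq_iff)

lemma on_R_circle_if_smult:
  assumes "on_R_circle A (k *s p)" "k \<noteq> 0"
  shows "on_R_circle A p"
proof -
  obtain r c where r: "real_vec r" "null_vec r" "c \<noteq> 0" "k *s p = c *s (A *v r)"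
    using assms(1) by (rule on_R_circleE)
  have "p = (c / k) *s (A *v r)"
    using r(4) assms(2) by (metis vector_smult_assoc vector_smult_lid divide_inverse_commute
        field_class.field_inverse)
  moreover have "unitary21 A" using assms(1) by (simp add: on_R_circle_def)
  ultimately show ?thesis
    unfolding on_R_circle_def same_point_def using r assms(2)
    by (intro conjI exI[of _ r] exI[of _ "c / k"]) auto
qed

lemma concyclic_R_if_normalized_pairings_real:
  assumes null: "null_vec p1" "null_vec q2" "null_vec q3" "null_vec q4"
    and h1: "herm q2 p1 = 1" "herm q3 p1 = 1" "herm q4 p1 = 1"
    and real: "herm q2 q3 \<in> \<real>" "herm q4 q2 \<in> \<real>" "herm q4 q3 \<in> \<real>"
    and nz: "herm q2 q3 \<noteq> 0"
  shows "concyclic_R p1 q2 q3 q4"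
proof -
  have h1': "herm p1 q2 = 1" "herm p1 q3 = 1" "herm p1 q4 = 1"
    using h1 by (metis cnj_herm complex_cnj_one)+
  have real': "herm q3 q2 \<in> \<real>" "herm q2 q4 \<in> \<real>" "herm q3 q4 \<in> \<real>"
    using real by (metis cnj_herm Reals_cnj_iff)+
  have "herm q3 q2 \<noteq> 0" using nz by (simp add: herm_swap_eq_0_iff)
  then obtain A where A: "\<And>w. null_vec w \<Longrightarrow> herm w p1 \<in> \<real> \<Longrightarrow> herm w q2 \<in> \<real>
                                 \<Longrightarrow> herm w q3 \<in> \<real> \<Longrightarrow> on_R_circle A w"
    using R_circle_through_null_triple[OF null(1-3) h1'(1) _ real'(1)] h1(2) by auto
  have "on_R_circle A p1" "on_R_circle A q2" "on_R_circle A q3" "on_R_circle A q4"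
    using null real real' by (auto intro!: A simp: h1 h1' null_vec_def)
  thus ?thesis unfolding concyclic_R_def by blast
qed

lemma concyclic_R_if_smult:
  assumes "concyclic_R p1 (k2 *s p2) (k3 *s p3) (k4 *s p4)" "k2 \<noteq> 0" "k3 \<noteq> 0" "k4 \<noteq> 0"
  shows "concyclic_R p1 p2 p3 p4"
  using assms on_R_circle_if_smult unfolding concyclic_R_def by blast

text \<open>Once p2, p3, p4 are rescaled to pair to 1 with p1, the three cycles are products of the
  remaining pairings X, Y, Z and their conjugates, which forces X, Y, Z to be real.\<close>
lemma concyclic_R_if_herm_cycles_nonneg:
  assumes null: "null_vec p1" "null_vec p2" "null_vec p3" "null_vec p4"
    and nz: "herm p1 p2 \<noteq> 0" "herm p1 p3 \<noteq> 0" "herm p1 p4 \<noteq> 0"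
      "herm p2 p3 \<noteq> 0" "herm p2 p4 \<noteq> 0" "herm p3 p4 \<noteq> 0"
    and cycles: "herm_cycle p1 p2 p3 p4 \<in> \<real>\<^sub>\<ge>\<^sub>0" "herm_cycle p1 p3 p2 p4 \<in> \<real>\<^sub>\<ge>\<^sub>0"
      "herm_cycle p1 p2 p4 p3 \<in> \<real>\<^sub>\<ge>\<^sub>0"
  shows "concyclic_R p1 p2 p3 p4"
proof -
  define k2 k3 k4 where "k2 = 1 / herm p2 p1" and "k3 = 1 / herm p3 p1" and "k4 = 1 / herm p4 p1"
  define q2 q3 q4 where "q2 = k2 *s p2" and "q3 = k3 *s p3" and "q4 = k4 *s p4"
  have k: "k2 \<noteq> 0" "k3 \<noteq> 0" "k4 \<noteq> 0"
    using nz by (simp_all add: k2_def k3_def k4_def herm_swap_eq_0_iff)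
  have h1: "herm q2 p1 = 1" "herm q3 p1 = 1" "herm q4 p1 = 1"
    using nz by (simp_all add: q2_def q3_def q4_def k2_def k3_def k4_def herm_smult_left
        herm_swap_eq_0_iff)
  hence h1': "herm p1 q2 = 1" "herm p1 q3 = 1" "herm p1 q4 = 1"
    by (metis cnj_herm complex_cnj_one)+
  define X Y Z where "X = herm q2 q3" and "Y = herm q4 q2" and "Z = herm q4 q3"
  have "herm_cycle p1 q2 q3 q4 \<in> \<real>\<^sub>\<ge>\<^sub>0" "herm_cycle p1 q3 q2 q4 \<in> \<real>\<^sub>\<ge>\<^sub>0"
    "herm_cycle p1 q2 q4 q3 \<in> \<real>\<^sub>\<ge>\<^sub>0"
    using herm_cycle_smult[of 1 p1] cycles by (simp_all add: q2_def q3_def q4_def)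
  hence "X * cnj Z \<in> \<real>\<^sub>\<ge>\<^sub>0" "cnj X * cnj Y \<in> \<real>\<^sub>\<ge>\<^sub>0" "cnj Y * Z \<in> \<real>\<^sub>\<ge>\<^sub>0"
    by (simp_all add: herm_cycle_def h1 h1' X_def Y_def Z_def cnj_herm)
  moreover have "X \<noteq> 0" "Y \<noteq> 0" "Z \<noteq> 0"
    using nz k by (simp_all add: X_def Y_def Z_def q2_def q3_def q4_def herm_smult_left
        herm_smult_right herm_swap_eq_0_iff)
  ultimately have "X \<in> \<real>" "Y \<in> \<real>" "Z \<in> \<real>"
    by (rule Reals_if_mult_cnj_nonneg)+
  hence "concyclic_R p1 q2 q3 q4"
    using null k h1 \<open>X \<noteq> 0\<close>
    by (intro concyclic_R_if_normalized_pairings_real)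
      (simp_all add: X_def Y_def Z_def q2_def q3_def q4_def null_vec_smult)
  thus ?thesis using k unfolding q2_def q3_def q4_def by (rule concyclic_R_if_smult)
qed

section \<open>Separation on the standard R-circle\<close>

lemma herm_std_R_pt: "herm (std_R_pt a) (std_R_pt b) = of_real (- 2 * (sin ((a - b) / 2))\<^sup>2)"
proof -
  have half: "2 * ((a - b) / 2) = a - b" by simp
  have cos: "cos (a - b) - 1 = - 2 * (sin ((a - b) / 2))\<^sup>2"
    using cos_double_sin[of "(a - b) / 2", unfolded half] by simp
  have "herm (std_R_pt a) (std_R_pt b) = of_real ((1 + cos a) * (- (1 - cos b) / 2)
      + sin a * sin b + (- (1 - cos a) / 2) * (1 + cos b))"
    by (simp add: herm_def std_R_pt_def)
  also have "\<dots> = of_real (cos (a - b) - 1)"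
    by (simp add: cos_diff field_simps)
  finally show ?thesis unfolding cos .
qed

lemma sin_half_diff_commute: "sin ((b - a) / 2) = - sin ((a - b) / 2)" for a b :: real
proof -
  have "(b - a) / 2 = - ((a - b) / 2)" by (simp add: field_simps)
  thus ?thesis by (simp only: sin_minus)
qed

lemma sin_half_diff_commute_sq: "(sin ((b - a) / 2))\<^sup>2 = (sin ((a - b) / 2))\<^sup>2" for a b :: real
  by (simp only: sin_half_diff_commute[of a b] power2_minus)

lemma KR_cross_std_R_pt:
  "KR_cross (std_R_pt t1) (std_R_pt t2) (std_R_pt t3) (std_R_pt t4)
     = of_real ((sin ((t1 - t3) / 2) * sin ((t2 - t4) / 2)
                 / (sin ((t1 - t4) / 2) * sin ((t2 - t3) / 2)))\<^sup>2)"
proof -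
  have "KR_cross (std_R_pt t1) (std_R_pt t2) (std_R_pt t3) (std_R_pt t4)
      = of_real ((- 2 * (sin ((t1 - t3) / 2))\<^sup>2) * (- 2 * (sin ((t2 - t4) / 2))\<^sup>2)
                / ((- 2 * (sin ((t1 - t4) / 2))\<^sup>2) * (- 2 * (sin ((t2 - t3) / 2))\<^sup>2)))"
    unfolding KR_cross_def herm_std_R_pt sin_half_diff_commute_sq[of t1 t3]
      sin_half_diff_commute_sq[of t2 t4] sin_half_diff_commute_sq[of t1 t4]
      sin_half_diff_commute_sq[of t2 t3]
    by (simp only: of_real_mult of_real_divide)
  thus ?thesis by (simp add: power_divide power_mult_distrib)
qed

lemma KR_cross_smult_unitary21:
  assumes "unitary21 A" "c1 \<noteq> 0" "c2 \<noteq> 0" "c3 \<noteq> 0" "c4 \<noteq> 0"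
  shows "KR_cross (c1 *s (A *v r1)) (c2 *s (A *v r2)) (c3 *s (A *v r3)) (c4 *s (A *v r4))
       = KR_cross r1 r2 r3 r4"
  using assms by (simp add: KR_cross_def herm_smult_unitary21)

lemma R_circle_paramE:
  assumes "R_circle_param A t p"
  obtains c where "unitary21 A" "0 \<le> t" "t < 2 * pi" "c \<noteq> 0" "p = c *s (A *v std_R_pt t)"
  using assms unfolding R_circle_param_def same_point_def by blast

lemma sgn_sin_half_diff:
  fixes a b :: real
  assumes "0 \<le> a" "a < 2 * pi" "0 \<le> b" "b < 2 * pi"
  shows "sgn (sin ((a - b) / 2)) = sgn (a - b)"
proof (cases a b rule: linorder_cases)
  case less
  hence "sin ((b - a) / 2) > 0" using assms by (intro sin_gt_zero) auto
  hence "sin ((a - b) / 2) < 0" by (simp add: sin_half_diff_commute[of b a])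
  thus ?thesis using less by simp
next
  case greater
  hence "sin ((a - b) / 2) > 0" using assms by (intro sin_gt_zero) auto
  thus ?thesis using greater by simp
qed simp

lemma separates_iff_mult_diff:
  fixes a b c d :: real
  assumes "c \<noteq> a" "c \<noteq> b" "d \<noteq> a" "d \<noteq> b"
  shows "separates a b c d \<longleftrightarrow> (c - a) * (c - b) * ((d - a) * (d - b)) < 0"
proof -
  have between: "(min a b < x \<and> x < max a b) \<longleftrightarrow> (x - a) * (x - b) < 0"
    if "x \<noteq> a" "x \<noteq> b" for x
    using that by (cases "a \<le> b") (auto simp: min_def max_def mult_less_0_iff)
  have sign: "(x < 0) \<noteq> (y < 0) \<longleftrightarrow> x * y < 0" if "x \<noteq> 0" "y \<noteq> 0" for x y :: real
    using that by (auto simp: mult_less_0_iff)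
  have "(c - a) * (c - b) \<noteq> 0" "(d - a) * (d - b) \<noteq> 0" using assms by auto
  thus ?thesis
    unfolding separates_def between[OF assms(1,2)] between[OF assms(3,4)] by (rule sign)
qed

lemma separates_iff_mult_sin:
  fixes a b c d :: real
  assumes "{a, b, c, d} \<subseteq> {0..<2 * pi}"
    and "c \<noteq> a" "c \<noteq> b" "d \<noteq> a" "d \<noteq> b"
  shows "separates a b c d \<longleftrightarrow>
    sin ((c - a) / 2) * sin ((c - b) / 2) * (sin ((d - a) / 2) * sin ((d - b) / 2)) < 0"
proof -
  have neg_iff_sgn: "x < 0 \<longleftrightarrow> sgn x = -1" for x :: real
    by (simp add: sgn_real_def)
  have "sgn (sin ((c - a) / 2) * sin ((c - b) / 2) * (sin ((d - a) / 2) * sin ((d - b) / 2)))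
      = sgn ((c - a) * (c - b) * ((d - a) * (d - b)))"
    using assms(1) by (simp add: sgn_mult sgn_sin_half_diff)
  thus ?thesis
    unfolding separates_iff_mult_diff[OF assms(2-)] neg_iff_sgn by simp
qed

lemma sin_ptolemy:
  fixes a b c d :: real
  shows "sin (a - c) * sin (b - d) = sin (a - b) * sin (c - d) + sin (a - d) * sin (b - c)"
  by (simp add: sin_diff algebra_simps)

lemma abs_ratios_if_add:
  fixes u v w :: real
  assumes "w \<noteq> 0" "u = v + w"
  shows "v * w > 0 \<Longrightarrow> \<bar>u\<bar> / \<bar>w\<bar> - \<bar>v\<bar> / \<bar>w\<bar> = 1"
    and "u * w < 0 \<Longrightarrow> \<bar>v\<bar> / \<bar>w\<bar> - \<bar>u\<bar> / \<bar>w\<bar> = 1"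
    and "u * v < 0 \<Longrightarrow> \<bar>u\<bar> / \<bar>w\<bar> + \<bar>v\<bar> / \<bar>w\<bar> = 1"
  using assms
  by (auto simp: zero_less_mult_iff mult_less_0_iff diff_divide_distrib[symmetric]
      add_divide_distrib[symmetric] abs_if)

lemma sqrt_KR_cross_std_R_pt_separation:
  fixes t1 t2 t3 t4 :: real
  assumes range: "{t1, t2, t3, t4} \<subseteq> {0..<2 * pi}"
    and distinct: "distinct [t1, t2, t3, t4]"
  defines "x1 \<equiv> Re (KR_cross (std_R_pt t1) (std_R_pt t2) (std_R_pt t3) (std_R_pt t4))"
    and "x2 \<equiv> Re (KR_cross (std_R_pt t1) (std_R_pt t3) (std_R_pt t2) (std_R_pt t4))"
  shows "separates t1 t3 t2 t4 \<Longrightarrow> sqrt x1 - sqrt x2 = 1"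
    and "separates t1 t2 t3 t4 \<Longrightarrow> sqrt x2 - sqrt x1 = 1"
    and "separates t1 t4 t2 t3 \<Longrightarrow> sqrt x1 + sqrt x2 = 1"
proof -
  define S :: "real \<Rightarrow> real \<Rightarrow> real" where "S i j = sin ((i - j) / 2)" for i j
  have S_swap: "S j i = - S i j" for i j
    unfolding S_def by (rule sin_half_diff_commute)
  define u v w where "u = S t1 t3 * S t2 t4" and "v = S t1 t2 * S t3 t4"
    and "w = S t1 t4 * S t2 t3"
  have "sgn (S t1 t4) \<noteq> 0" "sgn (S t2 t3) \<noteq> 0"
    using range distinct unfolding S_def by (simp_all add: sgn_sin_half_diff sgn_zero_iff)
  hence w: "w \<noteq> 0" by (simp add: w_def sgn_zero_iff)
  have "sin (t3 / 2 - t2 / 2) = - sin (t2 / 2 - t3 / 2)" by (metis minus_diff_eq sin_minus)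
  hence uvw: "u = v + w"
    using sin_ptolemy[of "t1 / 2" "t2 / 2" "t3 / 2" "t4 / 2"]
    by (simp add: u_def v_def w_def S_def diff_divide_distrib)
  have "sqrt x1 = \<bar>u\<bar> / \<bar>w\<bar>" "sqrt x2 = \<bar>v\<bar> / \<bar>w\<bar>"
    unfolding x1_def x2_def KR_cross_std_R_pt Re_complex_of_real real_sqrt_abs
    by (simp_all add: u_def v_def w_def S_def abs_mult sin_half_diff_commute[of t2 t3])
  moreover have "separates t1 t3 t2 t4 \<longleftrightarrow> v * w > 0"
    using separates_iff_mult_sin[of t1 t3 t2 t4] range distinct
    by (simp add: v_def w_def S_def[symmetric] S_swap[of t1 t2] S_swap[of t1 t4] S_swap[of t3 t4]
        algebra_simps insert_commute)
  moreover have "separates t1 t2 t3 t4 \<longleftrightarrow> u * w < 0"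
    using separates_iff_mult_sin[of t1 t2 t3 t4] range distinct
    by (simp add: u_def w_def S_def[symmetric] S_swap[of t1 t3] S_swap[of t2 t3] S_swap[of t1 t4]
        S_swap[of t2 t4] algebra_simps insert_commute)
  moreover have "separates t1 t4 t2 t3 \<longleftrightarrow> u * v < 0"
    using separates_iff_mult_sin[of t1 t4 t2 t3] range distinct
    by (simp add: u_def v_def S_def[symmetric] S_swap[of t1 t2] S_swap[of t1 t3]
        algebra_simps insert_commute)
  ultimately show "separates t1 t3 t2 t4 \<Longrightarrow> sqrt x1 - sqrt x2 = 1"
    and "separates t1 t2 t3 t4 \<Longrightarrow> sqrt x2 - sqrt x1 = 1"
    and "separates t1 t4 t2 t3 \<Longrightarrow> sqrt x1 + sqrt x2 = 1"
    using abs_ratios_if_add[OF w uvw] by simp_all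
qed

lemma R_circle_param_neq_if_herm_nonzero:
  assumes "R_circle_param A s p" "R_circle_param A t q" "herm p q \<noteq> 0"
  shows "s \<noteq> t"
proof
  assume "s = t"
  obtain c d where "unitary21 A" "p = c *s (A *v std_R_pt s)" "q = d *s (A *v std_R_pt t)"
    using assms(1,2) by (metis R_circle_paramE)
  thus False using assms(3) \<open>s = t\<close> by (simp add: herm_smult_unitary21 herm_std_R_pt)
qed

lemma sqrt_KR_cross_R_circle_param_separation:
  assumes R: "R_circle_param A t1 p1" "R_circle_param A t2 p2" "R_circle_param A t3 p3"
      "R_circle_param A t4 p4"
    and nz: "herm p1 p2 \<noteq> 0" "herm p1 p3 \<noteq> 0" "herm p1 p4 \<noteq> 0"
      "herm p2 p3 \<noteq> 0" "herm p2 p4 \<noteq> 0" "herm p3 p4 \<noteq> 0"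
  defines "x1 \<equiv> Re (KR_cross p1 p2 p3 p4)" and "x2 \<equiv> Re (KR_cross p1 p3 p2 p4)"
  shows "(separates t1 t3 t2 t4 \<longrightarrow> sqrt x1 - sqrt x2 = 1) \<and>
         (separates t1 t2 t3 t4 \<longrightarrow> sqrt x2 - sqrt x1 = 1) \<and>
         (separates t1 t4 t2 t3 \<longrightarrow> sqrt x1 + sqrt x2 = 1)"
proof -
  obtain c1 c2 c3 c4 where A: "unitary21 A" and c: "c1 \<noteq> 0" "c2 \<noteq> 0" "c3 \<noteq> 0" "c4 \<noteq> 0"
    and p: "p1 = c1 *s (A *v std_R_pt t1)" "p2 = c2 *s (A *v std_R_pt t2)"
      "p3 = c3 *s (A *v std_R_pt t3)" "p4 = c4 *s (A *v std_R_pt t4)"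
    using R by (metis R_circle_paramE)
  have "{t1, t2, t3, t4} \<subseteq> {0..<2 * pi}"
    using R by (auto elim: R_circle_paramE)
  moreover have "distinct [t1, t2, t3, t4]"
    using R nz by (auto dest: R_circle_param_neq_if_herm_nonzero)
  moreover have "x1 = Re (KR_cross (std_R_pt t1) (std_R_pt t2) (std_R_pt t3) (std_R_pt t4))"
      "x2 = Re (KR_cross (std_R_pt t1) (std_R_pt t3) (std_R_pt t2) (std_R_pt t4))"
    unfolding x1_def x2_def p using KR_cross_smult_unitary21[OF A] c by simp_all
  ultimately show ?thesis using sqrt_KR_cross_std_R_pt_separation by simp
qed

lemma herm_cycles_nonneg_if_concyclic_R:
  assumes "concyclic_R p1 p2 p3 p4"
    and "herm p1 p2 \<noteq> 0" "herm p1 p3 \<noteq> 0" "herm p1 p4 \<noteq> 0"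
  shows "herm_cycle p1 p2 p3 p4 \<in> \<real>\<^sub>\<ge>\<^sub>0" "herm_cycle p1 p3 p2 p4 \<in> \<real>\<^sub>\<ge>\<^sub>0"
    "herm_cycle p1 p2 p4 p3 \<in> \<real>\<^sub>\<ge>\<^sub>0"
  using assms unfolding concyclic_R_def by (auto intro: herm_cycle_nonneg_if_on_R_circle)

theorem theorem3p1:
  fixes p1 p2 p3 p4 :: "complex^3"
  assumes "null_vec p1" "null_vec p2" "null_vec p3" "null_vec p4"
    and "\<not> same_point p1 p2" "\<not> same_point p1 p3" "\<not> same_point p1 p4"
    and "\<not> same_point p2 p3" "\<not> same_point p2 p4" "\<not> same_point p3 p4"
  shows
    "let X1 = KR_cross p1 p2 p3 p4; X2 = KR_cross p1 p3 p2 p4 in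
       sqrt (cmod X1) + sqrt (cmod X2) \<ge> 1 \<and>
       -1 \<le> sqrt (cmod X1) - sqrt (cmod X2) \<and> sqrt (cmod X1) - sqrt (cmod X2) \<le> 1 \<and>
       ((sqrt (cmod X1) + sqrt (cmod X2) = 1 \<or> sqrt (cmod X1) - sqrt (cmod X2) = -1 \<or>
         sqrt (cmod X1) - sqrt (cmod X2) = 1) \<longleftrightarrow> concyclic_R p1 p2 p3 p4) \<and>
       (concyclic_R p1 p2 p3 p4 \<longrightarrow>
          X1 \<in> \<real> \<and> Re X1 > 0 \<and> X2 \<in> \<real> \<and> Re X2 > 0 \<and>
          (\<forall>A t1 t2 t3 t4.
             R_circle_param A t1 p1 \<and> R_circle_param A t2 p2 \<and>
             R_circle_param A t3 p3 \<and> R_circle_param A t4 p4 \<longrightarrow>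
             (separates t1 t3 t2 t4 \<longrightarrow> sqrt (Re X1) - sqrt (Re X2) = 1) \<and>
             (separates t1 t2 t3 t4 \<longrightarrow> sqrt (Re X2) - sqrt (Re X1) = 1) \<and>
             (separates t1 t4 t2 t3 \<longrightarrow> sqrt (Re X1) + sqrt (Re X2) = 1)))"
proof -
  note null = assms(1-4)
  have nz: "herm p1 p2 \<noteq> 0" "herm p1 p3 \<noteq> 0" "herm p1 p4 \<noteq> 0"
      "herm p2 p3 \<noteq> 0" "herm p2 p4 \<noteq> 0" "herm p3 p4 \<noteq> 0"
    using assms herm_null_nonzero by blast+
  note ptolemy = KR_cross_ptolemy[OF null nz(3,4)]
  note triangle = sqrt_triangle_if_heron[OF norm_ge_zero norm_ge_zero ptolemy(1)]
  have concyclic_iff: "(herm_cycle p1 p2 p3 p4 \<in> \<real>\<^sub>\<ge>\<^sub>0 \<and> herm_cycle p1 p3 p2 p4 \<in> \<real>\<^sub>\<ge>\<^sub>0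
      \<and> herm_cycle p1 p2 p4 p3 \<in> \<real>\<^sub>\<ge>\<^sub>0) \<longleftrightarrow> concyclic_R p1 p2 p3 p4"
    using concyclic_R_if_herm_cycles_nonneg[OF null nz]
      herm_cycles_nonneg_if_concyclic_R[OF _ nz(1-3)] by blast
  have "herm_cycle p1 p2 p3 p4 \<noteq> 0" "herm_cycle p1 p3 p2 p4 \<noteq> 0"
    using nz by (auto simp: herm_cycle_def herm_swap_eq_0_iff)
  hence "concyclic_R p1 p2 p3 p4 \<Longrightarrow> KR_cross p1 p2 p3 p4 \<in> \<real> \<and> Re (KR_cross p1 p2 p3 p4) > 0
      \<and> KR_cross p1 p3 p2 p4 \<in> \<real> \<and> Re (KR_cross p1 p3 p2 p4) > 0"
    using concyclic_iff KR_cross_real_pos_if_herm_cycle_nonneg by blast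
  thus ?thesis
    using triangle ptolemy(2) concyclic_iff sqrt_KR_cross_R_circle_param_separation[OF _ _ _ _ nz]
    by (simp add: Let_def) blast
qed

end
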